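(* Consider the DSA algorithm and its primal–dual variables $\mathbf{x}^t\in\mathbb{R}^{Np}$, $\mathbf{v}^t\in\mathbb{R}^{Np}$ as described in the context, and let $\mathbf{U}:=(\tilde{\mathbf{Z}}-\mathbf{Z})^{1/2}$ (positive semidefinite). Suppose the weight matrices $\mathbf{W},\tilde{\mathbf{W}}$ satisfy conditions (a)–(c) of the context. Then for every $t\ge 0$, $$\alpha\left[\hat{\mathbf{g}}^{t}-\nabla f(\mathbf{x}^* )\right]=(\mathbf{I}+\mathbf{Z}-2\tilde{\mathbf{Z}})(\mathbf{x}^*-\mathbf{x}^{t+1})+\tilde{\mathbf{Z}}(\mathbf{x}^{t}-\mathbf{x}^{t+1})-\mathbf{U}(\mathbf{v}^{t+1}-\mathbf{v}^* ).$$
   Context: Problem: a connected network of $N$ nodes; node $n$ holds $q_n$ differentiable functions $f_{n,i}:\mathbb{R}^p\to\mathbb{R}$, $i=1,\dots,q_n$, and $f_n:=\frac1{q_n}\sum_{i=1}^{q_n}f_{n,i}$. The goal is $\tilde{\mathbf{x}}^*:=\arg\min_{\mathbf{x}}\sum_{n=1}^N f_n(\mathbf{x})$ (assumed to exist). For $\mathbf{x}=[\mathbf{x}_1;\dots;\mathbf{x}_N]\in\mathbb{R}^{Np}$ set $f(\mathbf{x}):=\sum_n f_n(\mathbf{x}_n)$, so $\nabla f(\mathbf{x})=[\nabla f_1(\mathbf{x}_1);\dots;\nabla f_N(\mathbf{x}_N)]$, and $\mathbf{x}^*:=[\tilde{\mathbf{x}}^*;\dots;\tilde{\mathbf{x}}^*]$.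 Weights: symmetric matrices $\mathbf{W}=(w_{nm}),\tilde{\mathbf{W}}=(\tilde w_{nm})\in\mathbb{R}^{N\times N}$ whose entries are nonzero only if $m=n$ or $m$ is a neighbor of $n$, satisfying: (a) $\mathbf{W}=\mathbf{W}^T$, $\tilde{\mathbf{W}}=\tilde{\mathbf{W}}^T$; (b) $\mathrm{null}(\mathbf{I}-\tilde{\mathbf{W}})\supseteq\mathrm{span}(\mathbf{1})$, $\mathrm{null}(\mathbf{I}-\mathbf{W})=\mathrm{span}(\mathbf{1})$, $\mathrm{null}(\tilde{\mathbf{W}}-\mathbf{W})=\mathrm{span}(\mathbf{1})$; (c) $\mathbf{W}\preceq\tilde{\mathbf{W}}\preceq(\mathbf{I}+\mathbf{W})/2$ and $\tilde{\mathbf{W}}\succ 0$. Let $\mathbf{Z}:=\mathbf{W}\otimes\mathbf{I}_p$, $\tilde{\mathbf{Z}}:=\tilde{\mathbf{W}}\otimes\mathbf{I}_p$, $\mathbf{U}:=(\tilde{\mathbf{Z}}-\mathbf{Z})^{1/2}$. DSA: given stepsize $\alpha>0$ and initial $\mathbf{x}_n^0$, set $\mathbf{y}_{n,i}^0=\mathbf{x}_n^0$. At each $t\ge0$ each node $n$ draws $i_n^t$ uniformly from $\{1,\dots,q_n\}$, independently of the past, forms $\hat{\mathbf{g}}_n^t:=\nabla f_{n,i_n^t}(\mathbf{x}_n^t)-\nabla f_{n,i_n^t}(\mathbf{y}_{n,i_n^t}^t)+\frac1{q_n}\sum_{i=1}^{q_n}\nabla f_{n,i}(\mathbf{y}_{n,i}^t)$,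 and sets $\mathbf{y}_{n,i}^{t+1}=\mathbf{x}_n^t$ if $i=i_n^t$, $\mathbf{y}_{n,i}^{t+1}=\mathbf{y}_{n,i}^t$ otherwise. With $\hat{\mathbf{g}}^t:=[\hat{\mathbf{g}}_1^t;\dots;\hat{\mathbf{g}}_N^t]$: $\mathbf{x}^1=\mathbf{Z}\mathbf{x}^0-\alpha\hat{\mathbf{g}}^0$ and $\mathbf{x}^{t+1}=(\mathbf{I}+\mathbf{Z})\mathbf{x}^t-\tilde{\mathbf{Z}}\mathbf{x}^{t-1}-\alpha[\hat{\mathbf{g}}^t-\hat{\mathbf{g}}^{t-1}]$ for $t\ge1$. Dual variables: $\mathbf{v}^t:=\sum_{s=0}^t\mathbf{U}\mathbf{x}^s$; equivalently $\mathbf{v}^0=\mathbf{U}\mathbf{x}^0$, $\mathbf{x}^{t+1}=\mathbf{x}^t-\alpha\hat{\mathbf{g}}^t-(\mathbf{I}-\tilde{\mathbf{Z}})\mathbf{x}^t-\mathbf{U}\mathbf{v}^t$, $\mathbf{v}^{t+1}=\mathbf{v}^t+\mathbf{U}\mathbf{x}^{t+1}$. The optimal dual variable $\mathbf{v}^*$ is the vector in the column space of $\mathbf{U}$ with $\alpha\nabla f(\mathbf{x}^* )+\mathbf{U}\mathbf{v}^*=\mathbf{0}$. *)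

theory Defs
  imports "HOL-Analysis.Analysis"
begin

text \<open>Block vectors in R^(Np) are elements of real^'p^'n (node index 'n, local dimension 'p).
  Applying M \<otimes> I_p to a block vector x gives the block vector with n-th block
  sum over m of M n m times x_m.\<close>

definition kron_I :: "real^'n^'n \<Rightarrow> real^'p^'n \<Rightarrow> real^'p^'n" where
  "kron_I M x = (\<chi> n. \<Sum>m\<in>UNIV. (M$n$m) *\<^sub>R (x$m))"

definition psd_mat :: "real^'n^'n \<Rightarrow> bool" where
  "psd_mat M \<longleftrightarrow> (\<forall>x. 0 \<le> x \<bullet> (M *v x))"

definition pd_mat :: "real^'n^'n \<Rightarrow> bool" where
  "pd_mat M \<longleftrightarrow> (\<forall>x. x \<noteq> 0 \<longrightarrow> 0 < x \<bullet> (M *v x))"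

definition loewner_le :: "real^'n^'n \<Rightarrow> real^'n^'n \<Rightarrow> bool" where
  "loewner_le A B \<longleftrightarrow> psd_mat (B - A)"

definition is_psd_sqrt :: "real^'n^'n \<Rightarrow> real^'n^'n \<Rightarrow> bool" where
  "is_psd_sqrt S M \<longleftrightarrow> transpose S = S \<and> psd_mat S \<and> S ** S = M"

definition null_space :: "real^'n^'n \<Rightarrow> (real^'n) set" where
  "null_space M = {x. M *v x = 0}"

definition f_loc :: "('n \<Rightarrow> nat \<Rightarrow> real^'p \<Rightarrow> real) \<Rightarrow> ('n \<Rightarrow> nat) \<Rightarrow> 'n \<Rightarrow> real^'p \<Rightarrow> real" where
  "f_loc F q n y = (1 / real (q n)) * (\<Sum>i\<in>{1..q n}. F n i y)"

text \<open>Stacked gradient \<nabla>f(x) of f(x) = sum_n f_n(x_n), with G n i the gradient of f_(n,i);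
  \<nabla>f_n = (1/q_n) sum_i \<nabla>f_(n,i).\<close>
definition grad_f :: "('n \<Rightarrow> nat \<Rightarrow> real^'p \<Rightarrow> real^'p) \<Rightarrow> ('n \<Rightarrow> nat) \<Rightarrow> real^'p^'n \<Rightarrow> real^'p^'n" where
  "grad_f G q x = (\<chi> n. (1 / real (q n)) *\<^sub>R (\<Sum>i\<in>{1..q n}. G n i (x$n)))"

definition dsa_ghat :: "('n \<Rightarrow> nat \<Rightarrow> real^'p \<Rightarrow> real^'p) \<Rightarrow> ('n \<Rightarrow> nat) \<Rightarrow> (nat \<Rightarrow> 'n \<Rightarrow> nat)
     \<Rightarrow> nat \<Rightarrow> real^'p^'n \<Rightarrow> ('n \<Rightarrow> nat \<Rightarrow> real^'p) \<Rightarrow> real^'p^'n" where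
  "dsa_ghat G q idx t x y = (\<chi> n. G n (idx t n) (x$n) - G n (idx t n) (y n (idx t n))
        + (1 / real (q n)) *\<^sub>R (\<Sum>i\<in>{1..q n}. G n i (y n i)))"

definition dsa_yupd :: "(nat \<Rightarrow> 'n \<Rightarrow> nat) \<Rightarrow> nat \<Rightarrow> real^'p^'n \<Rightarrow> ('n \<Rightarrow> nat \<Rightarrow> real^'p)
     \<Rightarrow> ('n \<Rightarrow> nat \<Rightarrow> real^'p)" where
  "dsa_yupd idx t x y = (\<lambda>n i. if i = idx t n then x$n else y n i)"

text \<open>dsa_state ... t = (x^t, y^t, x^(t+1), y^(t+1)).\<close>
fun dsa_state :: "real^'n^'n \<Rightarrow> real^'n^'n \<Rightarrow> ('n \<Rightarrow> nat \<Rightarrow> real^'p \<Rightarrow> real^'p) \<Rightarrow> ('n \<Rightarrow> nat)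
     \<Rightarrow> (nat \<Rightarrow> 'n \<Rightarrow> nat) \<Rightarrow> real \<Rightarrow> real^'p^'n \<Rightarrow> nat
     \<Rightarrow> (real^'p^'n) \<times> ('n \<Rightarrow> nat \<Rightarrow> real^'p) \<times> (real^'p^'n) \<times> ('n \<Rightarrow> nat \<Rightarrow> real^'p)" where
  "dsa_state W Wt G q idx \<alpha> x0 0 =
     (let y0 = (\<lambda>n i. x0$n);
          g0 = dsa_ghat G q idx 0 x0 y0;
          x1 = kron_I W x0 - \<alpha> *\<^sub>R g0;
          y1 = dsa_yupd idx 0 x0 y0
      in (x0, y0, x1, y1))"
| "dsa_state W Wt G q idx \<alpha> x0 (Suc t) =
     (let (xp, yp, xc, yc) = dsa_state W Wt G q idx \<alpha> x0 t;
          gp = dsa_ghat G q idx t xp yp;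
          gc = dsa_ghat G q idx (Suc t) xc yc;
          xn = xc + kron_I W xc - kron_I Wt xp - \<alpha> *\<^sub>R (gc - gp);
          yn = dsa_yupd idx (Suc t) xc yc
      in (xc, yc, xn, yn))"

definition dsa_x where
  "dsa_x W Wt G q idx \<alpha> x0 t = fst (dsa_state W Wt G q idx \<alpha> x0 t)"

definition dsa_y where
  "dsa_y W Wt G q idx \<alpha> x0 t = fst (snd (dsa_state W Wt G q idx \<alpha> x0 t))"

definition dsa_g where
  "dsa_g W Wt G q idx \<alpha> x0 t =
     dsa_ghat G q idx t (dsa_x W Wt G q idx \<alpha> x0 t) (dsa_y W Wt G q idx \<alpha> x0 t)"

definition dsa_v where
  "dsa_v W Wt Uw G q idx \<alpha> x0 t = (\<Sum>s\<in>{0..t}. kron_I Uw (dsa_x W Wt G q idx \<alpha> x0 s))"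

end

theory Submission
  imports Defs
begin

text \<open>The two-step DSA recursion is the difference of two consecutive instances of the
  one-step primal-dual identity alpha g^t = Zt x^t - x^(t+1) - U v^t (Zt the extended weights), so
  this identity holds for all t by induction, using U^2 = Zt - Z. Subtracting the dual
  optimality condition alpha grad f(x*) = - U v*, using that I + Z - 2 Zt annihilates the
  consensus vector x*, and rewriting U v^t through v^(t+1) = v^t + U x^(t+1) gives the
  identity. Only conditions (b), the square-root property of U and the dual optimality
  condition are needed.\<close>

lemma kron_I_eq_matrix_mult: "kron_I M x = M ** x"
  by (simp add: kron_I_def matrix_matrix_mult_def vec_eq_iff sum_component)

lemma kron_I_mat_1: "kron_I (mat 1) x = x"
  by (simp add: kron_I_eq_matrix_mult)

lemma kron_I_kron_I: "kron_I A (kron_I B x) = kron_I (A ** B) x"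
  by (simp add: kron_I_eq_matrix_mult matrix_mul_assoc)

lemma kron_I_add: "kron_I A (x + y) = kron_I A x + kron_I A y"
  by (simp add: kron_I_eq_matrix_mult matrix_add_ldistrib)

lemma kron_I_diff: "kron_I A (x - y) = kron_I A x - kron_I A y"
  by (simp add: kron_I_def vec_eq_iff scaleR_diff_right sum_subtractf)

lemma kron_I_add_left: "kron_I (A + B) x = kron_I A x + kron_I B x"
  by (simp add: kron_I_def vec_eq_iff scaleR_add_left sum.distrib)

lemma kron_I_diff_left: "kron_I (A - B) x = kron_I A x - kron_I B x"
  by (simp add: kron_I_def vec_eq_iff scaleR_diff_left sum_subtractf)

lemma kron_I_scaleR_left: "kron_I (c *\<^sub>R A) x = c *\<^sub>R kron_I A x"
  by (simp add: kron_I_def vec_eq_iff scaleR_sum_right mult_ac)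

lemma kron_I_const_eq_0:
  assumes "M *v vec 1 = 0"
  shows "kron_I M (\<chi> n. c) = 0"
proof -
  have "(\<Sum>m\<in>UNIV. M$n$m) = 0" for n
    using assms by (simp add: vec_eq_iff matrix_vector_mult_def)
  then show ?thesis
    by (simp add: kron_I_def vec_eq_iff scaleR_sum_left[symmetric])
qed

lemma kron_I_penalty_const_diff:
  assumes "(mat 1 - W) *v vec 1 = 0" "(mat 1 - Wt) *v vec 1 = 0"
  shows "kron_I (mat 1 + W - 2 *\<^sub>R Wt) ((\<chi> n. c) - y) = 2 *\<^sub>R kron_I Wt y - kron_I W y - y"
proof -
  have "(mat 1 + W - 2 *\<^sub>R Wt) *v vec 1 = 2 *\<^sub>R ((mat 1 - Wt) *v vec 1) - (mat 1 - W) *v vec 1"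
    by (simp add: algebra_simps scaleR_matrix_vector_assoc) (simp add: vec_eq_iff)
  then have "kron_I (mat 1 + W - 2 *\<^sub>R Wt) (\<chi> n. c) = 0"
    using assms by (simp add: kron_I_const_eq_0)
  then have "kron_I (mat 1 + W - 2 *\<^sub>R Wt) ((\<chi> n. c) - y) = - kron_I (mat 1 + W - 2 *\<^sub>R Wt) y"
    by (simp add: kron_I_diff)
  then show ?thesis
    by (simp add: kron_I_diff_left kron_I_add_left kron_I_scaleR_left kron_I_mat_1)
qed

lemma dsa_x_0: "dsa_x W Wt G q idx \<alpha> x0 0 = x0"
  by (simp add: dsa_x_def Let_def)

lemma dsa_state_Suc:
  "dsa_x W Wt G q idx \<alpha> x0 (Suc t) = fst (snd (snd (dsa_state W Wt G q idx \<alpha> x0 t)))"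
  "dsa_y W Wt G q idx \<alpha> x0 (Suc t) = snd (snd (snd (dsa_state W Wt G q idx \<alpha> x0 t)))"
  by (cases "dsa_state W Wt G q idx \<alpha> x0 t"; simp add: dsa_x_def dsa_y_def split_def Let_def)+

lemma dsa_x_1:
  "dsa_x W Wt G q idx \<alpha> x0 (Suc 0) = kron_I W x0 - \<alpha> *\<^sub>R dsa_g W Wt G q idx \<alpha> x0 0"
  by (simp add: dsa_state_Suc dsa_g_def dsa_x_def dsa_y_def Let_def)

lemma dsa_x_Suc_Suc:
  "dsa_x W Wt G q idx \<alpha> x0 (Suc (Suc t)) =
     dsa_x W Wt G q idx \<alpha> x0 (Suc t) + kron_I W (dsa_x W Wt G q idx \<alpha> x0 (Suc t))
     - kron_I Wt (dsa_x W Wt G q idx \<alpha> x0 t)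
     - \<alpha> *\<^sub>R (dsa_g W Wt G q idx \<alpha> x0 (Suc t) - dsa_g W Wt G q idx \<alpha> x0 t)"
  by (cases "dsa_state W Wt G q idx \<alpha> x0 t")
    (simp add: dsa_state_Suc dsa_g_def dsa_x_def dsa_y_def Let_def)

lemma dsa_v_0: "dsa_v W Wt Uw G q idx \<alpha> x0 0 = kron_I Uw x0"
  by (simp add: dsa_v_def dsa_x_0)

lemma dsa_v_Suc:
  "dsa_v W Wt Uw G q idx \<alpha> x0 (Suc t) =
     dsa_v W Wt Uw G q idx \<alpha> x0 t + kron_I Uw (dsa_x W Wt G q idx \<alpha> x0 (Suc t))"
  by (simp add: dsa_v_def)

lemma kron_I_sqrt_twice:
  assumes "Uw ** Uw = Wt - W"
  shows "kron_I Uw (kron_I Uw x) = kron_I Wt x - kron_I W x"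
  by (simp add: kron_I_kron_I assms kron_I_diff_left)

lemma kron_I_dsa_v_Suc:
  assumes "Uw ** Uw = Wt - W"
  shows "kron_I Uw (dsa_v W Wt Uw G q idx \<alpha> x0 (Suc t)) =
    kron_I Uw (dsa_v W Wt Uw G q idx \<alpha> x0 t)
    + kron_I Wt (dsa_x W Wt G q idx \<alpha> x0 (Suc t)) - kron_I W (dsa_x W Wt G q idx \<alpha> x0 (Suc t))"
  by (simp add: dsa_v_Suc kron_I_add kron_I_sqrt_twice[OF assms])

lemma dsa_dual_form:
  assumes UU: "Uw ** Uw = Wt - W"
  shows "\<alpha> *\<^sub>R dsa_g W Wt G q idx \<alpha> x0 t =
    kron_I Wt (dsa_x W Wt G q idx \<alpha> x0 t) - dsa_x W Wt G q idx \<alpha> x0 (Suc t)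
    - kron_I Uw (dsa_v W Wt Uw G q idx \<alpha> x0 t)"
proof (induction t)
  case 0
  show ?case
    by (simp add: dsa_x_0 dsa_x_1 dsa_v_0 kron_I_sqrt_twice[OF UU])
next
  case (Suc k)
  define x where "x = dsa_x W Wt G q idx \<alpha> x0"
  define g where "g = dsa_g W Wt G q idx \<alpha> x0"
  define v where "v = dsa_v W Wt Uw G q idx \<alpha> x0"
  have step: "\<alpha> *\<^sub>R (g (Suc k) - g k) =
      x (Suc k) + kron_I W (x (Suc k)) - kron_I Wt (x k) - x (Suc (Suc k))"
    using dsa_x_Suc_Suc[of W Wt G q idx \<alpha> x0 k] unfolding x_def g_def
    by (simp add: algebra_simps)
  have IH: "\<alpha> *\<^sub>R g k = kron_I Wt (x k) - x (Suc k) - kron_I Uw (v k)"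
    using Suc.IH unfolding x_def g_def v_def .
  have "\<alpha> *\<^sub>R g (Suc k) = \<alpha> *\<^sub>R g k + \<alpha> *\<^sub>R (g (Suc k) - g k)"
    by (simp add: algebra_simps)
  also have "\<dots> = (kron_I Wt (x k) - x (Suc k) - kron_I Uw (v k))
      + (x (Suc k) + kron_I W (x (Suc k)) - kron_I Wt (x k) - x (Suc (Suc k)))"
    by (simp only: IH step)
  also have "\<dots> = kron_I W (x (Suc k)) - x (Suc (Suc k)) - kron_I Uw (v k)"
    by (simp add: algebra_simps)
  also have "\<dots> = kron_I Wt (x (Suc k)) - x (Suc (Suc k)) - kron_I Uw (v (Suc k))"
    unfolding v_def x_def kron_I_dsa_v_Suc[OF UU] by simp
  finally show ?case
    unfolding x_def g_def v_def .
qed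

theorem lemma2:
  fixes E :: "'n::finite \<Rightarrow> 'n \<Rightarrow> bool"
    and W Wt Uw :: "real^'n^'n"
    and F :: "'n \<Rightarrow> nat \<Rightarrow> real^'p::finite \<Rightarrow> real"
    and G :: "'n \<Rightarrow> nat \<Rightarrow> real^'p \<Rightarrow> real^'p"
    and q :: "'n \<Rightarrow> nat"
    and idx :: "nat \<Rightarrow> 'n \<Rightarrow> nat"
    and \<alpha> :: real and x0 :: "real^'p^'n"
    and xs :: "real^'p" and vstar :: "real^'p^'n"
  assumes E_sym: "\<And>n m. E n m \<Longrightarrow> E m n"
    and E_conn: "\<And>a b. (a, b) \<in> {(n, m). E n m}\<^sup>*"
    and W_supp: "\<And>n m. W$n$m \<noteq> 0 \<Longrightarrow> m = n \<or> E n m"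
    and Wt_supp: "\<And>n m. Wt$n$m \<noteq> 0 \<Longrightarrow> m = n \<or> E n m"
    and q_pos: "\<And>n. q n \<ge> 1"
    and grad: "\<And>n i y. i \<in> {1..q n} \<Longrightarrow> GDERIV (F n i) y :> G n i y"
    and xs_opt: "\<And>y. (\<Sum>n\<in>UNIV. f_loc F q n xs) \<le> (\<Sum>n\<in>UNIV. f_loc F q n y)"
    and a_W: "transpose W = W" and a_Wt: "transpose Wt = Wt"
    and b1: "span {vec 1} \<subseteq> null_space (mat 1 - Wt)"
    and b2: "null_space (mat 1 - W) = span {vec 1}"
    and b3: "null_space (Wt - W) = span {vec 1}"
    and c1: "loewner_le W Wt"
    and c2: "loewner_le Wt ((1/2) *\<^sub>R (mat 1 + W))"
    and c3: "pd_mat Wt"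
    and U_def: "is_psd_sqrt Uw (Wt - W)"
    and alpha_pos: "\<alpha> > 0"
    and idx_range: "\<And>t n. idx t n \<in> {1..q n}"
    and vstar_range: "vstar \<in> range (kron_I Uw)"
    and vstar_opt: "\<alpha> *\<^sub>R grad_f G q (\<chi> n. xs) + kron_I Uw vstar = 0"
  shows "\<alpha> *\<^sub>R (dsa_g W Wt G q idx \<alpha> x0 t - grad_f G q (\<chi> n. xs))
     = kron_I (mat 1 + W - 2 *\<^sub>R Wt) ((\<chi> n. xs) - dsa_x W Wt G q idx \<alpha> x0 (t+1))
       + kron_I Wt (dsa_x W Wt G q idx \<alpha> x0 t - dsa_x W Wt G q idx \<alpha> x0 (t+1))
       - kron_I Uw (dsa_v W Wt Uw G q idx \<alpha> x0 (t+1) - vstar)"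
proof -
  define x where "x = dsa_x W Wt G q idx \<alpha> x0"
  define v where "v = dsa_v W Wt Uw G q idx \<alpha> x0"
  have UU: "Uw ** Uw = Wt - W"
    using U_def by (simp add: is_psd_sqrt_def)
  have "(mat 1 - W) *v vec 1 = 0" "(mat 1 - Wt) *v vec 1 = 0"
    using b1 b2 by (auto simp: null_space_def intro: span_base)
  then have penalty: "kron_I (mat 1 + W - 2 *\<^sub>R Wt) ((\<chi> n. xs) - x (t+1))
      = 2 *\<^sub>R kron_I Wt (x (t+1)) - kron_I W (x (t+1)) - x (t+1)"
    by (rule kron_I_penalty_const_diff)
  have optimal: "\<alpha> *\<^sub>R grad_f G q (\<chi> n. xs) = - kron_I Uw vstar"
    using vstar_opt by (simp add: eq_neg_iff_add_eq_0)
  have dual: "\<alpha> *\<^sub>R dsa_g W Wt G q idx \<alpha> x0 t = kron_I Wt (x t) - x (t+1) - kron_I Uw (v t)"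
    using dsa_dual_form[OF UU] unfolding x_def v_def by simp
  have "kron_I Uw (v (t+1)) = kron_I Uw (v t) + kron_I Wt (x (t+1)) - kron_I W (x (t+1))"
    using kron_I_dsa_v_Suc[OF UU] unfolding v_def x_def by simp
  then show ?thesis
    unfolding x_def[symmetric] v_def[symmetric] scaleR_diff_right dual optimal penalty
    by (simp add: kron_I_diff algebra_simps scaleR_2)
qed

end
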